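(* Let $T$ be a binary search tree in the cursor model and consider any sequence of operations on $T$ consisting of $M$ cursor moves and $R$ rotations. Then there is a binary search tree $T'$, whose keys are those of $T$ together with two extra keys $\min$ and $\max$ (respectively smaller and larger than all keys of $T$), and a restricted sequence of operations on $T'$ consisting of $4M+3R$ cursor moves and $2M+R$ rotations, which simulates the sequence on $T$, i.e., the sequence of nodes visited by the cursor of $T$ is a subsequence of the sequence of nodes visited by the cursor of $T'$.
   Context: Cursor model of binary search trees: besides the tree there is a cursor located at a node (initially the root). The allowed operations are: compare the key at the cursor with the searched value; move the cursor to an adjacent node (left child, right child or parent); rotate the node at the cursor upwards (a single rotation, which makes the node the parent of its former parent while preserving the in-order key order). A sequence of operations on a tree is called restricted if (i) every node visited by the cursor or involved in a rotation has depth less than $3$ (depth = distance to the root, the root having depth $0$), and (ii) after every rotation the cursor moves back to the root. *)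

theory Defs
  imports "HOL-Library.Tree" "HOL-Library.Extended" "HOL-Library.Sublist"
begin

datatype dir = DL | DR

datatype cop = MoveLeft | MoveRight | MoveUp | RotateUp

type_synonym 'a cstate = "'a tree \<times> dir list"

fun subtree_at :: "'a tree \<Rightarrow> dir list \<Rightarrow> 'a tree" where
  "subtree_at t [] = t"
| "subtree_at Leaf (d # p) = Leaf"
| "subtree_at (Node l x r) (DL # p) = subtree_at l p"
| "subtree_at (Node l x r) (DR # p) = subtree_at r p"

fun replace_at :: "'a tree \<Rightarrow> dir list \<Rightarrow> 'a tree \<Rightarrow> 'a tree" where
  "replace_at t [] s = s"
| "replace_at Leaf (d # p) s = Leaf"
| "replace_at (Node l x r) (DL # p) s = Node (replace_at l p s) x r"
| "replace_at (Node l x r) (DR # p) s = Node l x (replace_at r p s)"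

fun rotate_child :: "dir \<Rightarrow> 'a tree \<Rightarrow> 'a tree option" where
  "rotate_child DL (Node (Node a x b) y c) = Some (Node a x (Node b y c))"
| "rotate_child DR (Node a y (Node b x c)) = Some (Node (Node a y b) x c)"
| "rotate_child _ _ = None"

fun step :: "cop \<Rightarrow> 'a cstate \<Rightarrow> 'a cstate option" where
  "step MoveLeft (t, p) =
     (if subtree_at t (p @ [DL]) \<noteq> Leaf then Some (t, p @ [DL]) else None)"
| "step MoveRight (t, p) =
     (if subtree_at t (p @ [DR]) \<noteq> Leaf then Some (t, p @ [DR]) else None)"
| "step MoveUp (t, p) = (if p = [] then None else Some (t, butlast p))"
| "step RotateUp (t, p) =
     (if p = [] then None else
        (case rotate_child (last p) (subtree_at t (butlast p)) of
           None \<Rightarrow> None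
         | Some s \<Rightarrow> Some (replace_at t (butlast p) s, butlast p)))"

text \<open>Running a sequence of operations: the list of all states, starting
with the initial one (length = number of operations + 1).\<close>
fun run :: "cop list \<Rightarrow> 'a cstate \<Rightarrow> 'a cstate list option" where
  "run [] s = Some [s]"
| "run (c # cs) s =
     (case step c s of
        None \<Rightarrow> None
      | Some s' \<Rightarrow> map_option (Cons s) (run cs s'))"

text \<open>The node (identified by its key) at the cursor.\<close>
definition cursor_key :: "'a cstate \<Rightarrow> 'a" where
  "cursor_key s = value (subtree_at (fst s) (snd s))"

definition visited :: "'a cstate list \<Rightarrow> 'a list" where
  "visited ss = map cursor_key ss"

definition num_moves :: "cop list \<Rightarrow> nat" where
  "num_moves cs = length (filter (\<lambda>c. c \<in> {MoveLeft, MoveRight, MoveUp}) cs)"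

definition num_rots :: "cop list \<Rightarrow> nat" where
  "num_rots cs = length (filter (\<lambda>c. c = RotateUp) cs)"

text \<open>Restricted sequence (with its list of states ss, ss!i being the state
before operation i): (i) every node visited by the cursor has depth < 3, and
every node involved in a rotation (rotated node and its parent) has depth < 3;
(ii) after every rotation the cursor moves back to the root, i.e. the
operations immediately following it are upward moves until the root is
reached.\<close>
definition restricted :: "cop list \<Rightarrow> 'a cstate list \<Rightarrow> bool" where
  "restricted cs ss \<longleftrightarrow>
     (\<forall>s \<in> set ss. length (snd s) < 3) \<and>
     (\<forall>i < length cs. cs ! i = RotateUp \<longrightarrow>
        length (snd (ss ! i)) < 3 \<and> length (snd (ss ! i)) - 1 < 3) \<and>
     (\<forall>i < length cs. cs ! i = RotateUp \<longrightarrow>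
        (\<exists>j. i < j \<and> j \<le> length cs \<and> snd (ss ! j) = [] \<and>
             (\<forall>k. i < k \<and> k < j \<longrightarrow> cs ! k = MoveUp)))"

end

theory Submission
  imports Defs
begin

text \<open>The simulating tree keeps the node under the cursor of \<open>T\<close> at its root. The left child of
the root starts a left-going path through the ancestors with smaller keys, nearest first, ending
in \<open>Minf\<close>; hanging to the right of this path are the left subtree of the cursor node and then
the left subtrees of those ancestors in turn. The right side is the mirror image, ending in
\<open>Pinf\<close>. A cursor operation of \<open>T\<close> changes this picture only down to depth 2, so it is replayed
near the root by a fixed block: 4 moves and 2 rotations for a move, 3 moves and 1 rotation for a
rotation, each rotation being followed at once by a return to the root.\<close>

abbreviation fin_tree :: "'a tree \<Rightarrow> 'a extended tree" where
  "fin_tree \<equiv> map_tree Fin"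

fun smaller_ancestors :: "'a tree \<Rightarrow> dir list \<Rightarrow> ('a \<times> 'a tree) list" where
  "smaller_ancestors t [] = []"
| "smaller_ancestors Leaf (d # p) = []"
| "smaller_ancestors (Node l x r) (DL # p) = smaller_ancestors l p"
| "smaller_ancestors (Node l x r) (DR # p) = smaller_ancestors r p @ [(x, l)]"

fun larger_ancestors :: "'a tree \<Rightarrow> dir list \<Rightarrow> ('a \<times> 'a tree) list" where
  "larger_ancestors t [] = []"
| "larger_ancestors Leaf (d # p) = []"
| "larger_ancestors (Node l x r) (DL # p) = larger_ancestors l p @ [(x, r)]"
| "larger_ancestors (Node l x r) (DR # p) = larger_ancestors r p"

fun lower_key :: "('a \<times> 'a tree) list \<Rightarrow> 'a extended" where
  "lower_key [] = Minf"
| "lower_key ((z, _) # _) = Fin z"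

fun lower_tree :: "('a \<times> 'a tree) list \<Rightarrow> 'a extended tree" where
  "lower_tree [] = Leaf"
| "lower_tree ((z, l) # zs) = Node (lower_tree zs) (lower_key zs) (fin_tree l)"

fun upper_key :: "('a \<times> 'a tree) list \<Rightarrow> 'a extended" where
  "upper_key [] = Pinf"
| "upper_key ((z, _) # _) = Fin z"

fun upper_tree :: "('a \<times> 'a tree) list \<Rightarrow> 'a extended tree" where
  "upper_tree [] = Leaf"
| "upper_tree ((z, r) # zs) = Node (fin_tree r) (upper_key zs) (upper_tree zs)"

definition rerooted :: "'a tree \<Rightarrow> dir list \<Rightarrow> 'a extended tree" where
  "rerooted t p = (case subtree_at t p of
       Leaf \<Rightarrow> Leaf
     | Node l x r \<Rightarrow>
         (let zs = smaller_ancestors t p; ws = larger_ancestors t p in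
          Node (Node (lower_tree zs) (lower_key zs) (fin_tree l)) (Fin x)
               (Node (fin_tree r) (upper_key ws) (upper_tree ws))))"

lemma subtree_at_Leaf [simp]: "subtree_at Leaf p = Leaf"
  by (cases p) auto

lemma subtree_at_append: "subtree_at t (p @ q) = subtree_at (subtree_at t p) q"
  by (induction t p rule: subtree_at.induct) auto

lemma ancestors_snoc:
  assumes "subtree_at t p = Node l x r"
  shows "smaller_ancestors t (p @ [DL]) = smaller_ancestors t p"
    and "larger_ancestors t (p @ [DL]) = (x, r) # larger_ancestors t p"
    and "smaller_ancestors t (p @ [DR]) = (x, l) # smaller_ancestors t p"
    and "larger_ancestors t (p @ [DR]) = larger_ancestors t p"
  using assms by (induction t p rule: subtree_at.induct) auto

lemma ancestors_replace_at:
  "smaller_ancestors (replace_at t p s) p = smaller_ancestors t p"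
  "larger_ancestors (replace_at t p s) p = larger_ancestors t p"
  by (induction t p rule: subtree_at.induct) auto

lemma subtree_at_replace_at: "subtree_at t p \<noteq> Leaf \<Longrightarrow> subtree_at (replace_at t p s) p = s"
  by (induction t p rule: subtree_at.induct) auto

fun locally_restricted :: "cop list \<Rightarrow> 'a cstate list \<Rightarrow> bool" where
  "locally_restricted [] [s] \<longleftrightarrow> length (snd s) < 3"
| "locally_restricted (c # cs) (s # ss) \<longleftrightarrow>
     length (snd s) < 3 \<and> ss \<noteq> [] \<and>
     (c = RotateUp \<longrightarrow>
        snd (hd ss) = [] \<or> (cs \<noteq> [] \<and> hd cs = MoveUp \<and> tl ss \<noteq> [] \<and> snd (hd (tl ss)) = [])) \<and>
     locally_restricted cs ss"
| "locally_restricted _ _ = False"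

lemma length_if_locally_restricted:
  "locally_restricted cs ss \<Longrightarrow> length ss = Suc (length cs)"
  by (induction cs ss rule: locally_restricted.induct) auto

lemma restricted_Cons:
  assumes len: "length ss = Suc (length cs)" and depth: "length (snd s) < 3"
    and rest: "restricted cs ss"
    and returns: "c = RotateUp \<Longrightarrow> \<exists>j \<le> length cs. snd (ss ! j) = [] \<and> (\<forall>k < j. cs ! k = MoveUp)"
  shows "restricted (c # cs) (s # ss)"
proof -
  have shallow: "\<forall>u \<in> set (s # ss). length (snd u) < 3"
    using depth rest by (simp add: restricted_def)
  have "\<exists>j. i < j \<and> j \<le> length (c # cs) \<and> snd ((s # ss) ! j) = [] \<and>
           (\<forall>k. i < k \<and> k < j \<longrightarrow> (c # cs) ! k = MoveUp)"
    if i: "i < length (c # cs)" "(c # cs) ! i = RotateUp" for i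
  proof (cases i)
    case 0
    then obtain j where "j \<le> length cs" "snd (ss ! j) = []" "\<forall>k < j. cs ! k = MoveUp"
      using returns i 0 by auto
    then show ?thesis
      using 0 by (intro exI[of _ "Suc j"]) (auto simp: less_Suc_eq_0_disj)
  next
    case (Suc i')
    then obtain j where "i' < j" "j \<le> length cs" "snd (ss ! j) = []"
        "\<forall>k. i' < k \<and> k < j \<longrightarrow> cs ! k = MoveUp"
      using rest i unfolding restricted_def by auto
    then show ?thesis
      using Suc by (intro exI[of _ "Suc j"]) (auto simp: less_Suc_eq_0_disj)
  qed
  moreover have "\<forall>i < length (c # cs). length (snd ((s # ss) ! i)) < 3"
    using shallow len by (metis length_Cons less_SucI nth_mem)
  ultimately show ?thesis
    using shallow unfolding restricted_def by auto
qed

lemma restricted_if_locally_restricted: "locally_restricted cs ss \<Longrightarrow> restricted cs ss"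
proof (induction cs ss rule: locally_restricted.induct)
  case (2 c cs s ss)
  have "\<exists>j \<le> length cs. snd (ss ! j) = [] \<and> (\<forall>k < j. cs ! k = MoveUp)"
    if "c = RotateUp"
  proof (cases "snd (hd ss) = []")
    case True
    then show ?thesis using "2.prems" by (intro exI[of _ 0]) (auto simp: hd_conv_nth)
  next
    case False
    then have "cs \<noteq> []" "hd cs = MoveUp" "tl ss \<noteq> []" "snd (hd (tl ss)) = []"
      using "2.prems" that by auto
    then show ?thesis
      by (intro exI[of _ 1]) (cases ss, auto simp: hd_conv_nth Suc_leI less_Suc_eq_0_disj)
  qed
  moreover have "length ss = Suc (length cs)"
    using "2.prems" length_if_locally_restricted[of cs ss] by simp
  ultimately show ?case
    using 2 by (intro restricted_Cons) auto
qed (auto simp: restricted_def)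

lemma locally_restricted_append:
  "locally_restricted cs1 (ss1 @ [s]) \<Longrightarrow> locally_restricted cs2 (s # ss2) \<Longrightarrow>
   locally_restricted (cs1 @ cs2) (ss1 @ s # ss2)"
proof (induction cs1 arbitrary: ss1)
  case Nil
  then show ?case using length_if_locally_restricted[OF Nil.prems(1)] by simp
next
  case (Cons c cs1)
  then obtain s0 ss1' where "ss1 = s0 # ss1'"
    using length_if_locally_restricted[OF Cons.prems(1)] by (cases ss1) auto
  moreover have "locally_restricted (cs1 @ cs2) (ss1' @ s # ss2)"
    using Cons calculation by simp
  ultimately show ?case
    using Cons.prems by (cases ss1'; cases cs1) (auto simp: hd_append)
qed

lemma run_hd: "run cs s = Some ss \<Longrightarrow> \<exists>ss'. ss = s # ss'"
  by (induction cs arbitrary: s ss) (auto split: option.splits)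

lemma run_append:
  "run cs1 s = Some (ss1 @ [s']) \<Longrightarrow> run cs2 s' = Some ss2 \<Longrightarrow>
   run (cs1 @ cs2) s = Some (ss1 @ ss2)"
proof (induction cs1 arbitrary: s ss1)
  case Nil
  then show ?case using run_hd[of cs2 s' ss2] by (cases ss1) auto
next
  case (Cons c cs1)
  then obtain s0 where "step c s = Some s0" "run cs1 s0 = Some (tl ss1 @ [s'])"
    by (cases ss1) (auto split: option.splits dest: run_hd)
  with Cons show ?case
    by (cases ss1) (auto split: option.splits)
qed

definition restricted_walk :: "cop list \<Rightarrow> 'a cstate \<Rightarrow> 'a cstate \<Rightarrow> bool" where
  "restricted_walk cs s s' \<longleftrightarrow>
     (\<exists>mid. run cs s = Some (s # mid @ [s']) \<and> locally_restricted cs (s # mid @ [s']))"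

fun simulating_ops :: "cop \<Rightarrow> dir list \<Rightarrow> cop list" where
  "simulating_ops MoveLeft p = [MoveLeft, MoveRight, RotateUp, MoveUp, MoveLeft, RotateUp]"
| "simulating_ops MoveRight p = [MoveRight, MoveLeft, RotateUp, MoveUp, MoveRight, RotateUp]"
| "simulating_ops MoveUp p = (if last p = DL
     then [MoveRight, RotateUp, MoveLeft, MoveLeft, RotateUp, MoveUp]
     else [MoveLeft, RotateUp, MoveRight, MoveRight, RotateUp, MoveUp])"
| "simulating_ops RotateUp p = (if last p = DL
     then [MoveRight, MoveRight, RotateUp, MoveUp]
     else [MoveLeft, MoveLeft, RotateUp, MoveUp])"

lemma num_moves_simulating_ops:
  "num_moves (simulating_ops c p) = (if c = RotateUp then 3 else 4)"
  by (cases c) (auto simp: num_moves_def)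

lemma num_rots_simulating_ops:
  "num_rots (simulating_ops c p) = (if c = RotateUp then 1 else 2)"
  by (cases c) (auto simp: num_rots_def)

text \<open>The blocks are verified by symbolic execution: the lemmas below only expose the shape of
\<open>t\<close> around the cursor down to the depth the block touches.\<close>

lemma simulate_MoveLeft:
  assumes "subtree_at t (p @ [DL]) \<noteq> Leaf"
  shows "restricted_walk (simulating_ops MoveLeft p) (rerooted t p, []) (rerooted t (p @ [DL]), [])"
proof -
  obtain l x r where at0: "subtree_at t p = Node l x r"
    using assms by (cases "subtree_at t p") (auto simp: subtree_at_append)
  moreover obtain a y b where "l = Node a y b"
    using assms at0 by (cases l) (auto simp: subtree_at_append)
  ultimately have at: "subtree_at t p = Node (Node a y b) x r" by simp
  show ?thesis
    using ancestors_snoc[OF at] at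
    by (simp add: restricted_walk_def rerooted_def subtree_at_append Let_def)
qed

lemma simulate_MoveRight:
  assumes "subtree_at t (p @ [DR]) \<noteq> Leaf"
  shows "restricted_walk (simulating_ops MoveRight p) (rerooted t p, []) (rerooted t (p @ [DR]), [])"
proof -
  obtain l x r where at0: "subtree_at t p = Node l x r"
    using assms by (cases "subtree_at t p") (auto simp: subtree_at_append)
  moreover obtain a y b where "r = Node a y b"
    using assms at0 by (cases r) (auto simp: subtree_at_append)
  ultimately have at: "subtree_at t p = Node l x (Node a y b)" by simp
  show ?thesis
    using ancestors_snoc[OF at] at
    by (simp add: restricted_walk_def rerooted_def subtree_at_append Let_def)
qed

lemma simulate_MoveUp:
  assumes "subtree_at t (p @ [d]) \<noteq> Leaf"
  shows "restricted_walk (simulating_ops MoveUp (p @ [d])) (rerooted t (p @ [d]), []) (rerooted t p, [])"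
proof -
  obtain l x r where at: "subtree_at t p = Node l x r"
    using assms by (cases "subtree_at t p") (auto simp: subtree_at_append)
  obtain a y b where "subtree_at t (p @ [d]) = Node a y b"
    using assms by (cases "subtree_at t (p @ [d])") auto
  then show ?thesis
    using ancestors_snoc[OF at] at
    by (cases d) (simp_all add: restricted_walk_def rerooted_def subtree_at_append Let_def)
qed

lemma simulate_RotateUp:
  assumes "subtree_at t (p @ [d]) \<noteq> Leaf" and "rotate_child d (subtree_at t p) = Some s"
  shows "restricted_walk (simulating_ops RotateUp (p @ [d]))
           (rerooted t (p @ [d]), []) (rerooted (replace_at t p s) p, [])"
proof -
  obtain l x r where at: "subtree_at t p = Node l x r"
    using assms by (cases "subtree_at t p") (auto simp: subtree_at_append)
  obtain a y b where "subtree_at t (p @ [d]) = Node a y b"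
    using assms by (cases "subtree_at t (p @ [d])") auto
  then show ?thesis
    using ancestors_snoc[OF at] at assms(2) subtree_at_replace_at[of t p s]
    by (cases d) (auto simp: restricted_walk_def rerooted_def subtree_at_append Let_def
        ancestors_replace_at)
qed

lemma rotate_child_Some_not_Leaf: "rotate_child d t = Some s \<Longrightarrow> s \<noteq> Leaf"
  by (cases "(d, t)" rule: rotate_child.cases) auto

lemma step_RotateUp_snoc:
  "step RotateUp (t, p @ [d]) =
     map_option (\<lambda>s. (replace_at t p s, p)) (rotate_child d (subtree_at t p))"
  by (simp split: option.split)

lemma simulate_step:
  assumes at: "subtree_at t p \<noteq> Leaf" and st: "step c (t, p) = Some (t', p')"
  shows "subtree_at t' p' \<noteq> Leaf \<and>
    restricted_walk (simulating_ops c p) (rerooted t p, []) (rerooted t' p', [])"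
proof (cases c)
  case MoveLeft
  then have "t' = t" "p' = p @ [DL]" "subtree_at t (p @ [DL]) \<noteq> Leaf"
    using st by (auto split: if_splits)
  with MoveLeft simulate_MoveLeft[of t p] show ?thesis by (simp del: simulating_ops.simps)
next
  case MoveRight
  then have "t' = t" "p' = p @ [DR]" "subtree_at t (p @ [DR]) \<noteq> Leaf"
    using st by (auto split: if_splits)
  with MoveRight simulate_MoveRight[of t p] show ?thesis by (simp del: simulating_ops.simps)
next
  case MoveUp
  then have "p \<noteq> []" using st by (cases "p = []") simp_all
  then obtain q d where p: "p = q @ [d]" using rev_exhaust by blast
  then have "t' = t" "p' = q" "subtree_at t q \<noteq> Leaf"
    using st at MoveUp by (auto simp: subtree_at_append)
  with simulate_MoveUp[of t q d] show ?thesis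
    using at unfolding p MoveUp by (simp del: simulating_ops.simps)
next
  case RotateUp
  then have "p \<noteq> []" using st by (cases "p = []") simp_all
  then obtain q d where p: "p = q @ [d]" using rev_exhaust by blast
  obtain s where rot: "rotate_child d (subtree_at t q) = Some s"
    and t': "t' = replace_at t q s" and p': "p' = q"
    using st unfolding p RotateUp step_RotateUp_snoc by auto
  have "subtree_at t q \<noteq> Leaf"
    using at unfolding p by (auto simp: subtree_at_append)
  then have "subtree_at t' p' \<noteq> Leaf"
    using t' p' subtree_at_replace_at[of t q s] rotate_child_Some_not_Leaf[OF rot] by simp
  moreover have "restricted_walk (simulating_ops c p) (rerooted t p, []) (rerooted t' p', [])"
    using simulate_RotateUp[of t q d, OF _ rot] at unfolding p RotateUp t' p'
    by (simp del: simulating_ops.simps)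
  ultimately show ?thesis ..
qed

lemma cursor_key_rerooted:
  "subtree_at t p \<noteq> Leaf \<Longrightarrow> cursor_key (rerooted t p, []) = Fin (cursor_key (t, p))"
  by (cases "subtree_at t p") (auto simp: cursor_key_def rerooted_def Let_def)

lemma num_moves_Cons: "num_moves (c # cs) = (if c = RotateUp then 0 else 1) + num_moves cs"
  by (cases c) (auto simp: num_moves_def)

lemma num_rots_Cons: "num_rots (c # cs) = (if c = RotateUp then 1 else 0) + num_rots cs"
  by (cases c) (auto simp: num_rots_def)

lemma num_moves_append: "num_moves (cs @ cs') = num_moves cs + num_moves cs'"
  by (simp add: num_moves_def)

lemma num_rots_append: "num_rots (cs @ cs') = num_rots cs + num_rots cs'"
  by (simp add: num_rots_def)

lemma restricted_simulation:
  assumes "subtree_at t p \<noteq> Leaf" and "run cs (t, p) = Some ss"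
  shows "\<exists>cs' ss'. run cs' (rerooted t p, []) = Some ss' \<and> locally_restricted cs' ss' \<and>
    num_moves cs' = 4 * num_moves cs + 3 * num_rots cs \<and>
    num_rots cs' = 2 * num_moves cs + num_rots cs \<and>
    subseq (map Fin (visited ss)) (visited ss')"
  using assms
proof (induction cs arbitrary: t p ss)
  case Nil
  then show ?case
    by (intro exI[of _ "[]"] exI[of _ "[(rerooted t p, [])]"])
      (auto simp: visited_def cursor_key_rerooted num_moves_def num_rots_def)
next
  case (Cons c cs)
  obtain t' p' ss0 where st: "step c (t, p) = Some (t', p')"
    and run0: "run cs (t', p') = Some ss0" and ss: "ss = (t, p) # ss0"
    using Cons.prems(2) by (auto split: option.splits)
  obtain mid where at': "subtree_at t' p' \<noteq> Leaf"
    and run1: "run (simulating_ops c p) (rerooted t p, []) =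
                 Some ((rerooted t p, []) # mid @ [(rerooted t' p', [])])"
    and loc1: "locally_restricted (simulating_ops c p)
                 ((rerooted t p, []) # mid @ [(rerooted t' p', [])])"
    using simulate_step[OF Cons.prems(1) st] unfolding restricted_walk_def by blast
  obtain cs2 ss2 where run2: "run cs2 (rerooted t' p', []) = Some ss2"
    and "locally_restricted cs2 ss2"
    and "num_moves cs2 = 4 * num_moves cs + 3 * num_rots cs"
        "num_rots cs2 = 2 * num_moves cs + num_rots cs"
    and sub: "subseq (map Fin (visited ss0)) (visited ss2)"
    using Cons.IH[OF at' run0] by blast
  moreover obtain ss2' where "ss2 = (rerooted t' p', []) # ss2'"
    using run_hd[OF run2] by blast
  ultimately have
    "run (simulating_ops c p @ cs2) (rerooted t p, []) = Some (((rerooted t p, []) # mid) @ ss2)"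
    "locally_restricted (simulating_ops c p @ cs2) (((rerooted t p, []) # mid) @ ss2)"
    "num_moves (simulating_ops c p @ cs2) = 4 * num_moves (c # cs) + 3 * num_rots (c # cs)"
    "num_rots (simulating_ops c p @ cs2) = 2 * num_moves (c # cs) + num_rots (c # cs)"
    using run_append[of _ _ "(rerooted t p, []) # mid"] run1 loc1
      locally_restricted_append[of _ "(rerooted t p, []) # mid"]
    by (auto simp: num_moves_Cons num_rots_Cons num_moves_append num_rots_append
        num_moves_simulating_ops num_rots_simulating_ops)
  moreover have "subseq (map Fin (visited ss)) (visited (((rerooted t p, []) # mid) @ ss2))"
    using sub cursor_key_rerooted[OF Cons.prems(1)]
    by (simp add: ss visited_def list_emb_append2)
  ultimately show ?case by blast
qed

lemma bst_fin_tree: "bst t \<Longrightarrow> bst (fin_tree t)"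
  by (induction t) (auto simp: tree.set_map)

lemma rerooted_Nil:
  assumes "bst t" and "t \<noteq> Leaf"
  shows "bst (rerooted t [])" and "set_tree (rerooted t []) = Fin ` set_tree t \<union> {Minf, Pinf}"
  using assms by (cases t; auto simp: rerooted_def tree.set_map bst_fin_tree)+

theorem lemma4p3:
  fixes T :: "'a::linorder tree" and cs :: "cop list" and ss :: "'a cstate list"
    and M R :: nat
  assumes "bst T" and "T \<noteq> Leaf"
    and "run cs (T, []) = Some ss"
    and "num_moves cs = M" and "num_rots cs = R"
  shows "\<exists>(T' :: 'a extended tree) cs' ss'.
           bst T' \<and> set_tree T' = Fin ` set_tree T \<union> {Minf, Pinf} \<and>
           run cs' (T', []) = Some ss' \<and> restricted cs' ss' \<and>
           num_moves cs' = 4 * M + 3 * R \<and> num_rots cs' = 2 * M + R \<and>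
           subseq (map Fin (visited ss)) (visited ss')"
  using restricted_simulation[of T "[]" cs ss] rerooted_Nil[OF assms(1,2)]
    restricted_if_locally_restricted assms
  by fastforce

end
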